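(* Let $X$ be a countable infinite set, $\mathcal{I}$ an ideal on $X$, and $\tau$ a zero-dimensional $\mathcal{I}$-crowded topology on $X$. Let $A\subseteq X$ and suppose $A$ admits a partition $A=\bigcup_{m\in\omega}A_m$ such that for every $m\in\omega$, $cl_\tau(A_m)=cl_\tau(A)$ and $A_m$ is $(\mathcal{I},\tau)$-crowded. Then there is a zero-dimensional $\mathcal{I}$-crowded topology $\tau'\supseteq\tau$ on $X$ such that $w(\tau')\le w(\tau)$, $A\in\tau'$, and $cl_{\tau'}(A)=cl_\tau(A)$.
   Context: An ideal on $X$ is a family of subsets of $X$ closed under subsets and finite unions; all ideals are assumed proper ($X\notin\mathcal{I}$) and free (every finite subset of $X$ is in $\mathcal{I}$). $\mathcal{I}^+=\mathcal{P}(X)\setminus\mathcal{I}$. A topology $\tau$ on $X$ is $\mathcal{I}$-crowded if $\tau\cap\mathcal{I}=\{\emptyset\}$. A set $A\subseteq X$ is $(\mathcal{I},\tau)$-crowded if for every $U\in\tau$, $A\cap U$ is either empty or belongs to $\mathcal{I}^+$. $w$ denotes weight. *)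

theory Defs
  imports "HOL-Analysis.Analysis" "HOL-Library.Equipollence"
begin

definition is_ideal_on :: "'a set \<Rightarrow> 'a set set \<Rightarrow> bool" where
  "is_ideal_on X I \<longleftrightarrow>
     I \<subseteq> Pow X \<and>
     (\<forall>A B. A \<in> I \<and> B \<subseteq> A \<longrightarrow> B \<in> I) \<and>
     (\<forall>A B. A \<in> I \<and> B \<in> I \<longrightarrow> A \<union> B \<in> I) \<and>
     X \<notin> I \<and>
     (\<forall>F. F \<subseteq> X \<and> finite F \<longrightarrow> F \<in> I)"

definition ideal_plus :: "'a set \<Rightarrow> 'a set set \<Rightarrow> 'a set set" where
  "ideal_plus X I = Pow X - I"

definition ideal_crowded_topology :: "'a set set \<Rightarrow> 'a topology \<Rightarrow> bool" where
  "ideal_crowded_topology I T \<longleftrightarrow> {U. openin T U} \<inter> I = {{}}"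

definition ideal_crowded_set :: "'a set set \<Rightarrow> 'a topology \<Rightarrow> 'a set \<Rightarrow> bool" where
  "ideal_crowded_set I T A \<longleftrightarrow>
     (\<forall>U. openin T U \<longrightarrow> A \<inter> U = {} \<or> A \<inter> U \<in> ideal_plus (topspace T) I)"

definition topology_base :: "'a topology \<Rightarrow> 'a set set \<Rightarrow> bool" where
  "topology_base T B \<longleftrightarrow>
     (\<forall>V\<in>B. openin T V) \<and> (\<forall>U. openin T U \<longrightarrow> (\<exists>\<U>. \<U> \<subseteq> B \<and> \<Union>\<U> = U))"

text \<open>w(T') \<le> w(T), where weight is (as usual, Engelking) the least cardinality of a base
  plus aleph_0.  Since cardinals are well-ordered this says: for every base B of T there is
  a base B' of T' with |B'| \<le> |B| + aleph_0.\<close>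
definition weight_le :: "'a topology \<Rightarrow> 'a topology \<Rightarrow> bool" where
  "weight_le T' T \<longleftrightarrow>
     (\<forall>B. topology_base T B \<longrightarrow>
        (\<exists>B'. topology_base T' B' \<and> B' \<lesssim> (B <+> (UNIV :: nat set))))"

end

theory Submission
  imports Defs
begin

text \<open>
  The new topology makes every part \<open>A\<^sub>m\<close> clopen.  It is generated by the sets
  \<open>V \<inter> cell As n x\<close> with \<open>V\<close> open in \<open>\<tau>\<close>, where the cell of a point of
  \<open>A\<^sub>m\<close> is \<open>A\<^sub>m\<close> and the cell of a point outside \<open>A\<close> is the complement of
  \<open>A\<^sub>0 \<union> \<dots> \<union> A\<^sub>n\<^sub>-\<^sub>1\<close>.  A neighbourhood of the second kind still contains
  \<open>V \<inter> A\<^sub>n\<close>, which is nonempty as soon as \<open>V\<close> meets \<open>cl\<^sub>\<tau>(A)\<close>, because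
  \<open>A\<^sub>n\<close> is dense in \<open>cl\<^sub>\<tau>(A)\<close>; hence the closure of \<open>A\<close> does not shrink.  The
  same observation shows that a nonempty new open set in \<open>\<I>\<close> would contain either a
  nonempty trace \<open>V \<inter> A\<^sub>m\<close> in \<open>\<I>\<close>, excluded by the crowdedness of \<open>A\<^sub>m\<close>,
  or a nonempty \<open>\<tau>\<close>-open set in \<open>\<I>\<close>.  Cells are closed in the new topology,
  which gives zero-dimensionality, and there are only countably many of them, which
  bounds the weight.
\<close>

definition cell :: "(nat \<Rightarrow> 'a set) \<Rightarrow> nat \<Rightarrow> 'a \<Rightarrow> 'a set" where
  "cell As n x = {y. (\<forall>k<n. y \<in> As k \<longrightarrow> x \<in> As k) \<and> (\<forall>k. x \<in> As k \<longrightarrow> y \<in> As k)}"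

lemma cell_self: "x \<in> cell As n x"
  by (simp add: cell_def)

lemma cell_antimono: "m \<le> n \<Longrightarrow> cell As n x \<subseteq> cell As m x"
  by (auto simp: cell_def)

lemma cell_subset_cell: "y \<in> cell As n x \<Longrightarrow> cell As n y \<subseteq> cell As n x"
  by (auto simp: cell_def)

lemma cell_disjoint_if_notin:
  assumes "y \<notin> cell As n x"
  shows "\<exists>m. cell As m y \<inter> cell As n x = {}"
proof -
  consider k where "k < n" "y \<in> As k" "x \<notin> As k" | k where "x \<in> As k" "y \<notin> As k"
    using assms by (auto simp: cell_def)
  then show ?thesis
  proof cases
    case 1
    then have "cell As 0 y \<inter> cell As n x = {}" by (auto simp: cell_def)
    then show ?thesis ..
  next
    case 2
    then have "cell As (Suc k) y \<inter> cell As n x = {}" by (auto simp: cell_def)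
    then show ?thesis ..
  qed
qed

lemma cell_eq_part:
  assumes "disjoint_family As" and "x \<in> As m"
  shows "cell As n x = As m"
proof
  have unique: "z \<in> As k \<longleftrightarrow> k = m" if "z \<in> As m" for z k
    using assms(1) that by (auto simp: disjoint_family_on_def)
  show "As m \<subseteq> cell As n x"
  proof
    fix y assume "y \<in> As m"
    then show "y \<in> cell As n x"
      using unique[OF assms(2)] unique[of y] by (simp add: cell_def)
  qed
qed (use assms(2) in \<open>auto simp: cell_def\<close>)

lemma cell_outside: "x \<notin> (\<Union>k. As k) \<Longrightarrow> cell As n x = - (\<Union>k<n. As k)"
  by (auto simp: cell_def)

lemma part_subset_cell_outside:
  assumes "disjoint_family As" and "x \<notin> (\<Union>k. As k)"
  shows "As n \<subseteq> cell As n x"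
proof
  fix y assume y: "y \<in> As n"
  have "y \<notin> As k" if "k < n" for k
    using disjoint_family_onD[OF assms(1) UNIV_I UNIV_I, of k n] that y by blast
  then show "y \<in> cell As n x"
    using assms(2) by (simp add: cell_def)
qed

lemma countable_cells:
  assumes "disjoint_family As"
  shows "countable {cell As n x | n x. True}"
proof (rule countable_subset)
  show "{cell As n x | n x. True} \<subseteq> range As \<union> range (\<lambda>n. - (\<Union>k<n. As k))"
  proof
    fix C assume "C \<in> {cell As n x | n x. True}"
    then obtain n x where C: "C = cell As n x" by blast
    show "C \<in> range As \<union> range (\<lambda>n. - (\<Union>k<n. As k))"
    proof (cases "x \<in> (\<Union>k. As k)")
      case True
      then obtain m where "x \<in> As m" by blast
      then show ?thesis
        using C cell_eq_part[OF assms] by simp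
    next
      case False
      then have "C = - (\<Union>k<n. As k)"
        by (simp only: C cell_outside[OF False])
      then show ?thesis
        by blast
    qed
  qed
qed simp

definition clopen_refinement :: "'a topology \<Rightarrow> (nat \<Rightarrow> 'a set) \<Rightarrow> 'a topology" where
  "clopen_refinement T As = topology (\<lambda>U. U \<subseteq> topspace T \<and>
     (\<forall>x\<in>U. \<exists>V n. openin T V \<and> x \<in> V \<and> V \<inter> cell As n x \<subseteq> U))"

lemma openin_clopen_refinement:
  "openin (clopen_refinement T As) U \<longleftrightarrow>
     U \<subseteq> topspace T \<and> (\<forall>x\<in>U. \<exists>V n. openin T V \<and> x \<in> V \<and> V \<inter> cell As n x \<subseteq> U)"
proof -
  define P where "P = (\<lambda>U. U \<subseteq> topspace T \<and>
     (\<forall>x\<in>U. \<exists>V n. openin T V \<and> x \<in> V \<and> V \<inter> cell As n x \<subseteq> U))"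
  have "istopology P"
    unfolding istopology_def
  proof (intro conjI allI impI)
    fix S U assume "P S" "P U"
    show "P (S \<inter> U)"
      unfolding P_def
    proof (intro conjI ballI)
      fix x assume "x \<in> S \<inter> U"
      then obtain V n V' n' where
        "openin T V" "x \<in> V" "V \<inter> cell As n x \<subseteq> S" "openin T V'" "x \<in> V'" "V' \<inter> cell As n' x \<subseteq> U"
        using \<open>P S\<close> \<open>P U\<close> unfolding P_def by (meson IntD1 IntD2)
      moreover have "cell As (max n n') x \<subseteq> cell As n x \<inter> cell As n' x"
        using cell_antimono[of n "max n n'" As x] cell_antimono[of n' "max n n'" As x] by auto
      ultimately show "\<exists>V n. openin T V \<and> x \<in> V \<and> V \<inter> cell As n x \<subseteq> S \<inter> U"
        by (intro exI[of _ "V \<inter> V'"] exI[of _ "max n n'"]) blast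
    qed (use \<open>P S\<close> in \<open>auto simp: P_def\<close>)
  next
    fix \<K> assume "\<forall>S\<in>\<K>. P S"
    then show "P (\<Union>\<K>)"
      unfolding P_def by (meson Union_iff Union_least Union_upper subset_trans)
  qed
  then have "openin (topology P) = P"
    by (rule topology_inverse')
  then show ?thesis
    by (simp add: clopen_refinement_def P_def)
qed

lemma openin_clopen_refinementE:
  assumes "openin (clopen_refinement T As) U" and "x \<in> U"
  obtains V n where "openin T V" "x \<in> V" "V \<inter> cell As n x \<subseteq> U"
proof -
  have "\<exists>V n. openin T V \<and> x \<in> V \<and> V \<inter> cell As n x \<subseteq> U"
    using assms openin_clopen_refinement by metis
  then show ?thesis
    using that by blast
qed

lemma topspace_clopen_refinement: "topspace (clopen_refinement T As) = topspace T"
proof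
  show "topspace (clopen_refinement T As) \<subseteq> topspace T"
    by (metis openin_clopen_refinement openin_topspace)
  show "topspace T \<subseteq> topspace (clopen_refinement T As)"
    by (rule openin_subset) (auto simp: openin_clopen_refinement)
qed

lemma openin_clopen_refinement_if_openin:
  assumes "openin T U"
  shows "openin (clopen_refinement T As) U"
  unfolding openin_clopen_refinement
proof (intro conjI ballI)
  show "U \<subseteq> topspace T"
    using assms by (rule openin_subset)
  fix x assume "x \<in> U"
  then show "\<exists>V n. openin T V \<and> x \<in> V \<and> V \<inter> cell As n x \<subseteq> U"
    using assms by (intro exI[of _ U] exI[of _ 0]) blast
qed

lemma openin_clopen_refinement_Int_cell:
  assumes "openin T V"
  shows "openin (clopen_refinement T As) (V \<inter> cell As n x)"
  unfolding openin_clopen_refinement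
proof (intro conjI ballI)
  show "V \<inter> cell As n x \<subseteq> topspace T"
    using openin_subset[OF assms] by blast
  fix y assume y: "y \<in> V \<inter> cell As n x"
  then have "V \<inter> cell As n y \<subseteq> V \<inter> cell As n x"
    using cell_subset_cell[of y As n x] by blast
  then show "\<exists>W m. openin T W \<and> y \<in> W \<and> W \<inter> cell As m y \<subseteq> V \<inter> cell As n x"
    using assms y by (intro exI[of _ V] exI[of _ n]) blast
qed

lemma closedin_clopen_refinement_cell:
  "closedin (clopen_refinement T As) (topspace T \<inter> cell As n x)"
  unfolding closedin_def topspace_clopen_refinement openin_clopen_refinement
proof (intro conjI ballI)
  fix y assume y: "y \<in> topspace T - topspace T \<inter> cell As n x"
  then have "y \<notin> cell As n x"
    by blast
  then obtain m where "cell As m y \<inter> cell As n x = {}"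
    by (auto dest: cell_disjoint_if_notin)
  then have "topspace T \<inter> cell As m y \<subseteq> topspace T - topspace T \<inter> cell As n x"
    by blast
  moreover have "y \<in> topspace T"
    using y by blast
  ultimately show "\<exists>V m. openin T V \<and> y \<in> V \<and> V \<inter> cell As m y \<subseteq> topspace T - topspace T \<inter> cell As n x"
    using openin_topspace by metis
qed auto

lemma openin_clopen_refinement_part:
  assumes "As m \<subseteq> topspace T"
  shows "openin (clopen_refinement T As) (As m)"
  unfolding openin_clopen_refinement
proof (intro conjI ballI)
  fix x assume x: "x \<in> As m"
  then have "topspace T \<inter> cell As 0 x \<subseteq> As m"
    by (auto simp: cell_def)
  moreover have "x \<in> topspace T"
    using assms x by blast
  ultimately show "\<exists>V n. openin T V \<and> x \<in> V \<and> V \<inter> cell As n x \<subseteq> As m"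
    using openin_topspace by metis
qed (fact assms)

lemma closedin_clopen_refinement_if_closedin:
  assumes "closedin T C"
  shows "closedin (clopen_refinement T As) C"
  using assms openin_clopen_refinement_if_openin[of T "topspace T - C" As]
  by (simp add: closedin_def topspace_clopen_refinement)

lemma clopen_refinement_dim_le_0:
  assumes "T dim_le 0"
  shows "clopen_refinement T As dim_le 0"
  unfolding dimension_le_0_neighbourhood_base_of_clopen neighbourhood_base_of
proof (intro allI impI)
  let ?T' = "clopen_refinement T As"
  fix W x assume "openin ?T' W \<and> x \<in> W"
  then obtain V n where V: "openin T V" "x \<in> V" "V \<inter> cell As n x \<subseteq> W"
    by (meson openin_clopen_refinementE)
  have "neighbourhood_base_of (\<lambda>C. closedin T C \<and> openin T C) T"
    using assms by (simp add: dimension_le_0_neighbourhood_base_of_clopen)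
  then obtain U C where C: "openin T U" "closedin T C" "openin T C" "x \<in> U" "U \<subseteq> C" "C \<subseteq> V"
    using V(1,2) unfolding neighbourhood_base_of by meson
  have "closedin ?T' (C \<inter> (topspace T \<inter> cell As n x))"
    using closedin_clopen_refinement_if_closedin[OF C(2)] closedin_clopen_refinement_cell
    by (rule closedin_Int)
  moreover have "C \<inter> (topspace T \<inter> cell As n x) = C \<inter> cell As n x"
    using closedin_subset[OF C(2)] by blast
  ultimately have clo: "closedin ?T' (C \<inter> cell As n x)"
    by simp
  have opn: "openin ?T' (C \<inter> cell As n x)"
    using C(3) by (rule openin_clopen_refinement_Int_cell)
  have mem: "x \<in> C \<inter> cell As n x"
    using C(4,5) cell_self[of x As n] by blast
  have sub: "C \<inter> cell As n x \<subseteq> W"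
    using C(6) V(3) by blast
  show "\<exists>U C. openin ?T' U \<and> (closedin ?T' C \<and> openin ?T' C) \<and> x \<in> U \<and> U \<subseteq> C \<and> C \<subseteq> W"
    by (intro exI[of _ "C \<inter> cell As n x"] exI[of _ "C \<inter> cell As n x"])
      (simp only: clo opn mem sub order_refl simp_thms)
qed

lemma topology_base_clopen_refinement:
  assumes "topology_base T B"
  shows "topology_base (clopen_refinement T As) {V \<inter> cell As n x | V n x. V \<in> B}"
    (is "topology_base _ ?B'")
  unfolding topology_base_def
proof (intro conjI ballI allI impI)
  fix W assume "W \<in> ?B'"
  then obtain V n x where W: "W = V \<inter> cell As n x" "V \<in> B"
    by blast
  then have "openin T V"
    using assms unfolding topology_base_def by blast
  then show "openin (clopen_refinement T As) W"
    unfolding W(1) by (rule openin_clopen_refinement_Int_cell)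
next
  fix U assume U: "openin (clopen_refinement T As) U"
  have "U \<subseteq> \<Union>{W \<in> ?B'. W \<subseteq> U}"
  proof
    fix x assume "x \<in> U"
    with U obtain V n where V: "openin T V" "x \<in> V" "V \<inter> cell As n x \<subseteq> U"
      by (rule openin_clopen_refinementE)
    obtain \<V> where "\<V> \<subseteq> B" "\<Union>\<V> = V"
      using assms V(1) unfolding topology_base_def by blast
    then obtain V' where V': "V' \<in> B" "x \<in> V'" "V' \<subseteq> V"
      using V(2) by blast
    then have "V' \<inter> cell As n x \<in> {W \<in> ?B'. W \<subseteq> U}"
      using V(3) by auto
    then show "x \<in> \<Union>{W \<in> ?B'. W \<subseteq> U}"
      using V'(2) cell_self[of x As n] by blast
  qed
  then show "\<exists>\<U>. \<U> \<subseteq> ?B' \<and> \<Union>\<U> = U"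
    by (intro exI[of _ "{W \<in> ?B'. W \<subseteq> U}"]) auto
qed

lemma Times_countable_lepoll:
  assumes "countable C"
  shows "B \<times> C \<lesssim> B <+> (UNIV :: nat set)"
proof (cases "finite B")
  case True
  then have "countable (B \<times> C)"
    using assms by (simp add: countable_finite)
  then have "B \<times> C \<lesssim> (UNIV :: nat set)"
    by (auto simp: countable_def lepoll_def)
  also have "(UNIV :: nat set) \<lesssim> B <+> (UNIV :: nat set)"
    unfolding lepoll_def by (intro exI[of _ Inr]) auto
  finally show ?thesis .
next
  case False
  have "C \<lesssim> (UNIV :: nat set)"
    using assms by (auto simp: countable_def lepoll_def)
  then have "B \<times> C \<lesssim> B \<times> (UNIV :: nat set)"
    by (simp add: times_lepoll_mono)
  also have "B \<times> (UNIV :: nat set) \<approx> B"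
  proof -
    have "\<exists>f. inj_on f (UNIV :: nat set) \<and> f ` UNIV \<subseteq> B"
      using False infinite_le_lepoll[of B] unfolding lepoll_def by blast
    then have "ordLeq3 (card_of (UNIV :: nat set)) (card_of B)"
      by (simp only: card_of_ordLeq)
    then have "ordIso2 (card_of (B \<times> (UNIV :: nat set))) (card_of B)"
      by (rule conjunct1[OF card_of_Times_infinite[OF False UNIV_not_empty]])
    then show ?thesis
      by (simp only: eqpoll_iff_card_of_ordIso)
  qed
  also have "B \<lesssim> B <+> (UNIV :: nat set)"
    unfolding lepoll_def by (intro exI[of _ Inl]) auto
  finally show ?thesis .
qed

lemma weight_le_clopen_refinement:
  assumes "disjoint_family As"
  shows "weight_le (clopen_refinement T As) T"
  unfolding weight_le_def
proof (intro allI impI)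
  fix B assume "topology_base T B"
  let ?B' = "{V \<inter> cell As n x | V n x. V \<in> B}"
  have "?B' \<subseteq> (\<lambda>(V, C). V \<inter> C) ` (B \<times> {cell As n x | n x. True})"
  proof
    fix W assume "W \<in> ?B'"
    then obtain V n x where "W = V \<inter> cell As n x" "V \<in> B"
      by blast
    then show "W \<in> (\<lambda>(V, C). V \<inter> C) ` (B \<times> {cell As n x | n x. True})"
      by (intro image_eqI[of _ _ "(V, cell As n x)"]) auto
  qed
  then have "?B' \<lesssim> B \<times> {cell As n x | n x. True}"
    by (meson image_lepoll lepoll_trans subset_imp_lepoll)
  also have "\<dots> \<lesssim> B <+> (UNIV :: nat set)"
    using assms by (intro Times_countable_lepoll countable_cells)
  finally show "\<exists>B'. topology_base (clopen_refinement T As) B' \<and> B' \<lesssim> B <+> (UNIV :: nat set)"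
    using \<open>topology_base T B\<close> topology_base_clopen_refinement by blast
qed

lemma closure_of_clopen_refinement_subset:
  "clopen_refinement T As closure_of S \<subseteq> T closure_of S"
proof -
  have "continuous_map (clopen_refinement T As) T id"
    using topology_finer_continuous_id[of T "clopen_refinement T As"]
    by (simp add: topspace_clopen_refinement openin_clopen_refinement_if_openin)
  then show ?thesis
    using continuous_map_image_closure_subset[of "clopen_refinement T As" T id S] by simp
qed

lemma closure_of_clopen_refinement_Union:
  assumes disj: "disjoint_family As"
    and dense: "\<And>n. T closure_of (\<Union>k. As k) \<subseteq> T closure_of As n"
  shows "clopen_refinement T As closure_of (\<Union>k. As k) = T closure_of (\<Union>k. As k)"
proof
  show "clopen_refinement T As closure_of (\<Union>k. As k) \<subseteq> T closure_of (\<Union>k. As k)"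
    by (rule closure_of_clopen_refinement_subset)
next
  show "T closure_of (\<Union>k. As k) \<subseteq> clopen_refinement T As closure_of (\<Union>k. As k)"
  proof
    fix x assume x: "x \<in> T closure_of (\<Union>k. As k)"
    then have x_space: "x \<in> topspace (clopen_refinement T As)"
      unfolding topspace_clopen_refinement in_closure_of by blast
    show "x \<in> clopen_refinement T As closure_of (\<Union>k. As k)"
    proof (cases "x \<in> (\<Union>k. As k)")
      case True
      then show ?thesis
        using x_space closure_of_subset_Int[of "clopen_refinement T As" "\<Union>k. As k"] by blast
    next
      case False
      have "\<exists>y. y \<in> (\<Union>k. As k) \<and> y \<in> U"
        if U: "x \<in> U" "openin (clopen_refinement T As) U" for U
      proof -
        obtain V n where V: "openin T V" "x \<in> V" "V \<inter> cell As n x \<subseteq> U"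
          using U(2,1) by (rule openin_clopen_refinementE)
        have "x \<in> T closure_of As n"
          using x dense[of n] by blast
        then obtain y where "y \<in> As n" "y \<in> V"
          using V(1,2) unfolding in_closure_of by blast
        moreover have "As n \<subseteq> cell As n x"
          using disj False by (rule part_subset_cell_outside)
        ultimately show ?thesis
          using V(3) by blast
      qed
      then show ?thesis
        using x_space unfolding in_closure_of by blast
    qed
  qed
qed

lemma ideal_crowded_clopen_refinement:
  assumes I_down: "\<And>U V. U \<in> I \<Longrightarrow> V \<subseteq> U \<Longrightarrow> V \<in> I"
    and crowded: "ideal_crowded_topology I T"
    and disj: "disjoint_family As"
    and dense: "\<And>n. T closure_of (\<Union>k. As k) \<subseteq> T closure_of As n"
    and parts: "\<And>n. ideal_crowded_set I T (As n)"
  shows "ideal_crowded_topology I (clopen_refinement T As)"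
proof -
  have empty_if_open_in_I: "V = {}" if "openin T V" "V \<in> I" for V
  proof -
    have "V \<in> {U. openin T U} \<inter> I"
      using that by simp
    then show ?thesis
      using crowded unfolding ideal_crowded_topology_def by simp
  qed
  have empty_if_trace_in_I: "V \<inter> As n = {}" if "openin T V" "V \<inter> As n \<in> I" for V n
  proof -
    have "As n \<inter> V = {} \<or> As n \<inter> V \<notin> I"
      using parts[of n] that(1) unfolding ideal_crowded_set_def ideal_plus_def by blast
    then show ?thesis
      using that(2) by (simp add: Int_commute)
  qed
  have "U = {}" if U: "openin (clopen_refinement T As) U" "U \<in> I" for U
  proof (rule ccontr)
    assume "U \<noteq> {}"
    then obtain x where "x \<in> U"
      by blast
    with U(1) obtain V n where V: "openin T V" "x \<in> V" "V \<inter> cell As n x \<subseteq> U"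
      by (rule openin_clopen_refinementE)
    then have small: "V \<inter> cell As n x \<in> I"
      using I_down U(2) by blast
    show False
    proof (cases "x \<in> (\<Union>k. As k)")
      case True
      then obtain m where m: "x \<in> As m"
        by blast
      then have "V \<inter> As m \<in> I"
        using small cell_eq_part[OF disj m] by simp
      then have "V \<inter> As m = {}"
        by (rule empty_if_trace_in_I[OF V(1)])
      then show False
        using m V(2) by blast
    next
      case False
      have "As n \<subseteq> cell As n x"
        using disj False by (rule part_subset_cell_outside)
      then have "V \<inter> As n \<in> I"
        using I_down[OF small] by blast
      then have "V \<inter> As n = {}"
        by (rule empty_if_trace_in_I[OF V(1)])
      then have "V \<inter> T closure_of As n = {}"
        using openin_Int_closure_of_eq_empty[OF V(1)] by simp
      then have "V \<inter> T closure_of (\<Union>k. As k) = {}"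
        using dense[of n] by blast
      then have "V \<inter> (\<Union>k. As k) = {}"
        using closure_of_subset_Int[of T "\<Union>k. As k"] openin_subset[OF V(1)] by blast
      then have "V \<subseteq> cell As n x"
        using False by (auto simp: cell_def)
      then have "V = {}"
        using small empty_if_open_in_I[OF V(1)] by (simp add: Int_absorb2)
      then show False
        using V(2) by blast
    qed
  qed
  moreover have "{} \<in> I"
    using crowded unfolding ideal_crowded_topology_def by (metis IntD2 singletonI)
  ultimately show ?thesis
    unfolding ideal_crowded_topology_def by auto
qed

theorem mainTheorem1:
  fixes X :: "'a set" and I :: "'a set set" and T :: "'a topology"
    and A :: "'a set" and As :: "nat \<Rightarrow> 'a set"
  assumes "countable X" and "infinite X"
    and "is_ideal_on X I"
    and "topspace T = X" and "T dim_le 0" and "ideal_crowded_topology I T"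
    and "A \<subseteq> X"
    and "(\<Union>m. As m) = A"
    and "\<And>m n. m \<noteq> n \<Longrightarrow> As m \<inter> As n = {}"
    and "\<And>m. T closure_of (As m) = T closure_of A"
    and "\<And>m. ideal_crowded_set I T (As m)"
  shows "\<exists>T'. topspace T' = X \<and> T' dim_le 0 \<and> ideal_crowded_topology I T' \<and>
              (\<forall>U. openin T U \<longrightarrow> openin T' U) \<and>
              weight_le T' T \<and>
              openin T' A \<and>
              T' closure_of A = T closure_of A"
proof -
  have disj: "disjoint_family As"
    using assms(9) by (auto simp: disjoint_family_on_def)
  have I_down: "\<And>U V. U \<in> I \<Longrightarrow> V \<subseteq> U \<Longrightarrow> V \<in> I"
    using assms(3) by (auto simp: is_ideal_on_def)
  have dense: "T closure_of (\<Union>k. As k) \<subseteq> T closure_of As n" for n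
    using assms(8,10) by simp
  have "As m \<subseteq> topspace T" for m
    using assms(4,7,8) by blast
  then have "openin (clopen_refinement T As) (\<Union>m. As m)"
    by (intro openin_Union) (auto intro: openin_clopen_refinement_part)
  show ?thesis
  proof (intro exI[of _ "clopen_refinement T As"] conjI allI impI)
    show "topspace (clopen_refinement T As) = X"
      using assms(4) by (rule trans[OF topspace_clopen_refinement])
    show "clopen_refinement T As dim_le 0"
      using assms(5) by (rule clopen_refinement_dim_le_0)
    show "ideal_crowded_topology I (clopen_refinement T As)"
      using I_down assms(6) disj dense assms(11) by (rule ideal_crowded_clopen_refinement)
    show "openin (clopen_refinement T As) U" if "openin T U" for U
      using that by (rule openin_clopen_refinement_if_openin)
    show "weight_le (clopen_refinement T As) T"
      using disj by (rule weight_le_clopen_refinement)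
    show "openin (clopen_refinement T As) A"
      using \<open>openin (clopen_refinement T As) (\<Union>m. As m)\<close> assms(8) by simp
    show "clopen_refinement T As closure_of A = T closure_of A"
      using closure_of_clopen_refinement_Union[OF disj dense] assms(8) by simp
  qed
qed

end
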